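(* Let $n\ge 2$ and let $q=e^{i\theta}$ with $\theta\in\mathbb{R}$ and $|\theta|<2\pi/n$ (so $q$ is specialized to a complex number). Then for every $\sigma\in\mathrm{B}_n$, every pole $s\in\mathbb{C}$ of $\zeta(e^{-s},\sigma;\beta_{n,q})$ satisfies $\mathrm{Re}(s)=0$.
   Context: $\mathrm{B}_n$ is the braid group on $n$ strands with standard generators $\sigma_1,\dots,\sigma_{n-1}$. The Burau representation $\beta_{n,q}$ is the homomorphism from $\mathrm{B}_n$ to invertible $n\times n$ matrices over $\mathbb{Z}[q^{\pm1}]$ with $\beta_{n,q}(\sigma_i)=I_{i-1}\oplus\begin{pmatrix}1-q&1\\ q&0\end{pmatrix}\oplus I_{n-i-1}$; for $q\in\mathbb{C}^\times$ it is specialized to complex matrices. The braid zeta function is $\zeta(s,\sigma;\beta_{n,q}):=\det(I_n-\beta_{n,q}(\sigma)s)^{-1}$. *)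

theory Defs
  imports "HOL-Analysis.Analysis" "Jordan_Normal_Form.Determinant"
begin

text \<open>Pole, as in HOL-Complex_Analysis (Complex_Singularities.is_pole).\<close>
definition is_pole :: "('a::topological_space \<Rightarrow> 'b::real_normed_vector) \<Rightarrow> 'a \<Rightarrow> bool"
  where "is_pole f a = (LIM x (at a). f x :> at_infinity)"

text \<open>Burau matrix of the generator sigma_i (1 \<le> i \<le> n-1); rows/columns are 0-indexed,
  so the 2x2 block occupies rows/columns i-1 and i.\<close>
definition burau_gen :: "nat \<Rightarrow> complex \<Rightarrow> nat \<Rightarrow> complex mat" where
  "burau_gen n q i = mat n n (\<lambda>(r, c).
     if r = i - 1 \<and> c = i - 1 then 1 - q
     else if r = i - 1 \<and> c = i then 1
     else if r = i \<and> c = i - 1 then q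
     else if r = i \<and> c = i then 0
     else if r = c then 1 else 0)"

text \<open>Burau matrix of sigma_i^{-1} (the inverse of burau_gen, for q \<noteq> 0).\<close>
definition burau_gen_inv :: "nat \<Rightarrow> complex \<Rightarrow> nat \<Rightarrow> complex mat" where
  "burau_gen_inv n q i = mat n n (\<lambda>(r, c).
     if r = i - 1 \<and> c = i - 1 then 0
     else if r = i - 1 \<and> c = i then inverse q
     else if r = i \<and> c = i - 1 then 1
     else if r = i \<and> c = i then 1 - inverse q
     else if r = c then 1 else 0)"

text \<open>Braids in B_n are represented by words in the generators: a letter (i, True) is
  sigma_i, a letter (i, False) is sigma_i^{-1}; a word is valid if 1 \<le> i \<le> n-1.\<close>
type_synonym braid_word = "(nat \<times> bool) list"

definition braid_word :: "nat \<Rightarrow> braid_word \<Rightarrow> bool" where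
  "braid_word n w \<longleftrightarrow> (\<forall>(i, b) \<in> set w. 1 \<le> i \<and> i \<le> n - 1)"

fun burau :: "nat \<Rightarrow> complex \<Rightarrow> braid_word \<Rightarrow> complex mat" where
  "burau n q [] = 1\<^sub>m n"
| "burau n q ((i, b) # w) =
     (if b then burau_gen n q i else burau_gen_inv n q i) * burau n q w"

definition braid_zeta :: "nat \<Rightarrow> complex \<Rightarrow> braid_word \<Rightarrow> complex \<Rightarrow> complex" where
  "braid_zeta n q w s = inverse (det (1\<^sub>m n - s \<cdot>\<^sub>m burau n q w))"

end

theory Submission
  imports Defs
begin

text \<open>Write \<open>q = r\<^sup>2\<close> with \<open>|r| = 1\<close> and pass to the partial sums
  \<open>a j = x 0 + \<dots> + x (j - 1)\<close> of a vector \<open>x\<close>. The generator \<open>\<sigma>\<^sub>i\<close> changes only \<open>a i\<close>, by the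
  affine map \<open>a i \<mapsto> a (i + 1) + q (a (i - 1) - a i)\<close>, so every Burau matrix preserves the
  total sum \<open>a n\<close> and the Hermitian form \<open>burau_form\<close>. Comparing with the path graph, whose
  adjacency eigenvalues are \<open>2 cos (k \<pi> / n)\<close>, this form is positive definite on \<open>a 0 = a n = 0\<close>
  once \<open>Re r > cos (\<pi> / n)\<close>, which is the hypothesis \<open>|\<theta>| < 2\<pi> / n\<close>. A pole at \<open>s\<close> yields an
  eigenvector \<open>x = e\<^sup>-\<^sup>s M x\<close>: if its total sum is nonzero then \<open>e\<^sup>-\<^sup>s = 1\<close>, and otherwise
  invariance of the definite form forces \<open>|e\<^sup>-\<^sup>s| = 1\<close>.\<close>

definition partial_sum :: "complex vec \<Rightarrow> nat \<Rightarrow> complex" where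
  "partial_sum x j = (\<Sum>k<j. x $ k)"

lemma partial_sum_Suc: "partial_sum x (Suc j) = partial_sum x j + x $ j"
  by (simp add: partial_sum_def)

lemma partial_sum_smult: "j \<le> dim_vec x \<Longrightarrow> partial_sum (c \<cdot>\<^sub>v x) j = c * partial_sum x j"
  unfolding partial_sum_def by (simp add: sum_distrib_left)

lemma burau_gen_mult_vec:
  assumes x: "x \<in> carrier_vec n" and i: "1 \<le> i" "i \<le> n - 1"
  shows "burau_gen n q i *\<^sub>v x = vec n (\<lambda>r. if r = i - 1 then (1 - q) * x $ (i - 1) + x $ i
            else if r = i then q * x $ (i - 1) else x $ r)"
proof (rule eq_vecI)
  fix r assume "r < dim_vec (vec n (\<lambda>r. if r = i - 1 then (1 - q) * x $ (i - 1) + x $ i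
            else if r = i then q * x $ (i - 1) else x $ r))"
  then have r: "r < n" by simp
  have "(burau_gen n q i *\<^sub>v x) $ r = (\<Sum>c<n. burau_gen n q i $$ (r, c) * x $ c)"
    using r x by (simp add: burau_gen_def scalar_prod_def atLeast0LessThan)
  also have "\<dots> = (\<Sum>c<n. (if c = i - 1 then (if r = i - 1 then 1 - q else if r = i then q else 0) * x $ (i - 1) else 0)
     + (if c = i then (if r = i - 1 then 1 else 0) * x $ i else 0)
     + (if c = r \<and> r \<noteq> i - 1 \<and> r \<noteq> i then x $ r else 0))"
    by (rule sum.cong, simp, insert r i, auto simp: burau_gen_def)
  also have "\<dots> = (if r = i - 1 then (1 - q) * x $ (i - 1) + x $ i
            else if r = i then q * x $ (i - 1) else x $ r)"
    using r i by (simp add: sum.distrib; linarith)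
  finally show "(burau_gen n q i *\<^sub>v x) $ r = vec n (\<lambda>r. if r = i - 1 then (1 - q) * x $ (i - 1) + x $ i
            else if r = i then q * x $ (i - 1) else x $ r) $ r"
    using r by simp
qed (simp add: burau_gen_def)

lemma burau_gen_inv_mult_vec:
  assumes x: "x \<in> carrier_vec n" and i: "1 \<le> i" "i \<le> n - 1"
  shows "burau_gen_inv n q i *\<^sub>v x = vec n (\<lambda>r. if r = i - 1 then inverse q * x $ i
            else if r = i then x $ (i - 1) + (1 - inverse q) * x $ i else x $ r)"
proof (rule eq_vecI)
  fix r assume "r < dim_vec (vec n (\<lambda>r. if r = i - 1 then inverse q * x $ i
            else if r = i then x $ (i - 1) + (1 - inverse q) * x $ i else x $ r))"
  then have r: "r < n" by simp
  have "(burau_gen_inv n q i *\<^sub>v x) $ r = (\<Sum>c<n. burau_gen_inv n q i $$ (r, c) * x $ c)"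
    using r x by (simp add: burau_gen_inv_def scalar_prod_def atLeast0LessThan)
  also have "\<dots> = (\<Sum>c<n. (if c = i - 1 then (if r = i then 1 else 0) * x $ (i - 1) else 0)
     + (if c = i then (if r = i - 1 then inverse q else if r = i then 1 - inverse q else 0) * x $ i else 0)
     + (if c = r \<and> r \<noteq> i - 1 \<and> r \<noteq> i then x $ r else 0))"
    by (rule sum.cong, simp, insert r i, auto simp: burau_gen_inv_def)
  also have "\<dots> = (if r = i - 1 then inverse q * x $ i
            else if r = i then x $ (i - 1) + (1 - inverse q) * x $ i else x $ r)"
    using r i by (simp add: sum.distrib; linarith)
  finally show "(burau_gen_inv n q i *\<^sub>v x) $ r = vec n (\<lambda>r. if r = i - 1 then inverse q * x $ i
            else if r = i then x $ (i - 1) + (1 - inverse q) * x $ i else x $ r) $ r"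
    using r by simp
qed (simp add: burau_gen_inv_def)

lemma partial_sum_pair_update:
  fixes x y :: "complex vec"
  assumes i: "1 \<le> i" "i < n"
    and same: "\<And>k. k < n \<Longrightarrow> k \<noteq> i - 1 \<Longrightarrow> k \<noteq> i \<Longrightarrow> y $ k = x $ k"
    and pair: "y $ (i - 1) + y $ i = x $ (i - 1) + x $ i"
  shows partial_sum_pair_update_other: "\<And>j. j \<le> n \<Longrightarrow> j \<noteq> i \<Longrightarrow> partial_sum y j = partial_sum x j"
    and partial_sum_pair_update_at: "partial_sum y i = partial_sum x (i - 1) + y $ (i - 1)"
proof -
  show other: "partial_sum y j = partial_sum x j" if j: "j \<le> n" "j \<noteq> i" for j
  proof (cases "j < i")
    case True
    then show ?thesis unfolding partial_sum_def using same i j by (intro sum.cong) auto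
  next
    case False
    then have ji: "i < j" using j by auto
    then have "i - 1 < j" by arith
    have "partial_sum y j = (\<Sum>k<j. x $ k + ((if k = i - 1 then y $ (i - 1) - x $ (i - 1) else 0)
          + (if k = i then y $ i - x $ i else 0)))"
      unfolding partial_sum_def using same i j ji by (intro sum.cong) auto
    also have "\<dots> = partial_sum x j + ((y $ (i - 1) - x $ (i - 1)) + (y $ i - x $ i))"
      using ji i \<open>i - 1 < j\<close> by (simp add: sum.distrib partial_sum_def)
    also have "\<dots> = partial_sum x j" using pair by (simp add: algebra_simps)
    finally show ?thesis .
  qed
  have "i = Suc (i - 1)" using i by simp
  then have "partial_sum y i = partial_sum y (i - 1) + y $ (i - 1)"
    by (metis partial_sum_Suc)
  also have "partial_sum y (i - 1) = partial_sum x (i - 1)" using i by (intro other) auto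
  finally show "partial_sum y i = partial_sum x (i - 1) + y $ (i - 1)" .
qed

lemma partial_sum_burau_gen:
  assumes x: "x \<in> carrier_vec n" and i: "1 \<le> i" "i \<le> n - 1"
  shows "\<And>j. j \<le> n \<Longrightarrow> j \<noteq> i \<Longrightarrow> partial_sum (burau_gen n q i *\<^sub>v x) j = partial_sum x j"
    and "partial_sum (burau_gen n q i *\<^sub>v x) i
           = partial_sum x (i + 1) + q * partial_sum x (i - 1) - q * partial_sum x i"
proof -
  define y where "y = burau_gen n q i *\<^sub>v x"
  have y: "y $ (i - 1) = (1 - q) * x $ (i - 1) + x $ i" "y $ i = q * x $ (i - 1)"
    "\<And>k. k < n \<Longrightarrow> k \<noteq> i - 1 \<Longrightarrow> k \<noteq> i \<Longrightarrow> y $ k = x $ k"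
    using i unfolding y_def burau_gen_mult_vec[OF x i] by auto
  have pair: "y $ (i - 1) + y $ i = x $ (i - 1) + x $ i"
    unfolding y by (simp add: algebra_simps)
  show "partial_sum y j = partial_sum x j" if "j \<le> n" "j \<noteq> i" for j
    using partial_sum_pair_update_other[of i n, OF _ _ y(3) pair] i that by auto
  have at: "partial_sum y i = partial_sum x (i - 1) + y $ (i - 1)"
    using partial_sum_pair_update_at[of i n, OF _ _ y(3) pair] i by simp
  have "i = Suc (i - 1)" using i by simp
  then have "partial_sum x i = partial_sum x (i - 1) + x $ (i - 1)"
    by (metis partial_sum_Suc)
  then show "partial_sum y i = partial_sum x (i + 1) + q * partial_sum x (i - 1) - q * partial_sum x i"
    using at unfolding y(1) by (simp add: partial_sum_Suc algebra_simps)
qed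

lemma partial_sum_burau_gen_inv:
  assumes x: "x \<in> carrier_vec n" and i: "1 \<le> i" "i \<le> n - 1"
  shows "\<And>j. j \<le> n \<Longrightarrow> j \<noteq> i \<Longrightarrow> partial_sum (burau_gen_inv n q i *\<^sub>v x) j = partial_sum x j"
    and "partial_sum (burau_gen_inv n q i *\<^sub>v x) i
           = partial_sum x (i - 1) + inverse q * (partial_sum x (i + 1) - partial_sum x i)"
proof -
  define y where "y = burau_gen_inv n q i *\<^sub>v x"
  have y: "y $ (i - 1) = inverse q * x $ i" "y $ i = x $ (i - 1) + (1 - inverse q) * x $ i"
    "\<And>k. k < n \<Longrightarrow> k \<noteq> i - 1 \<Longrightarrow> k \<noteq> i \<Longrightarrow> y $ k = x $ k"
    using i unfolding y_def burau_gen_inv_mult_vec[OF x i] by auto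
  have pair: "y $ (i - 1) + y $ i = x $ (i - 1) + x $ i"
    unfolding y by (simp add: algebra_simps)
  show "partial_sum y j = partial_sum x j" if "j \<le> n" "j \<noteq> i" for j
    using partial_sum_pair_update_other[of i n, OF _ _ y(3) pair] i that by auto
  have at: "partial_sum y i = partial_sum x (i - 1) + y $ (i - 1)"
    using partial_sum_pair_update_at[of i n, OF _ _ y(3) pair] i by simp
  then show "partial_sum y i = partial_sum x (i - 1) + inverse q * (partial_sum x (i + 1) - partial_sum x i)"
    unfolding y(1) by (simp add: partial_sum_Suc)
qed

definition burau_form :: "nat \<Rightarrow> complex \<Rightarrow> (nat \<Rightarrow> complex) \<Rightarrow> real" where
  "burau_form n r a = 2 * Re r * (\<Sum>j\<in>{1..<n}. (cmod (a j))\<^sup>2)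
     - (\<Sum>j<n. 2 * Re (cnj r * cnj (a j) * a (Suc j)))"

definition burau_form_local :: "complex \<Rightarrow> complex \<Rightarrow> complex \<Rightarrow> complex \<Rightarrow> real" where
  "burau_form_local r u y v =
     2 * Re r * (cmod y)\<^sup>2 - 2 * Re (cnj r * cnj u * y) - 2 * Re (cnj r * cnj y * v)"

lemma burau_form_local_reflect:
  assumes r: "cmod r = 1"
  shows "burau_form_local r u (v + r\<^sup>2 * u - r\<^sup>2 * y) v = burau_form_local r u y v"
proof -
  have r0: "r \<noteq> 0" using r by auto
  have cnj_r: "cnj r = inverse r"
    using r by (metis complex_norm_square mult.commute norm_one of_real_1 power_one r0
        divide_self_if inverse_eq_divide nonzero_divide_eq_eq mult.right_neutral)
  have two_Re: "2 * complex_of_real (Re z) = z + cnj z" for z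
    by (simp add: complex_add_cnj)
  \<comment> \<open>Once conjugates are distributed, \<open>cnj u, cnj y, cnj v\<close> enter as independent variables.\<close>
  have identity: "(r + inverse r) * ((v + r\<^sup>2 * u - r\<^sup>2 * y) * (V + (inverse r)\<^sup>2 * U - (inverse r)\<^sup>2 * Y))
     - (inverse r * U * (v + r\<^sup>2 * u - r\<^sup>2 * y) + r * u * (V + (inverse r)\<^sup>2 * U - (inverse r)\<^sup>2 * Y))
     - (inverse r * (V + (inverse r)\<^sup>2 * U - (inverse r)\<^sup>2 * Y) * v + r * (v + r\<^sup>2 * u - r\<^sup>2 * y) * V)
     = (r + inverse r) * (y * Y) - (inverse r * U * y + r * u * Y) - (inverse r * Y * v + r * y * V)"
    for U Y V
    using r0 by (simp add: field_simps power2_eq_square power3_eq_cube)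
  have "complex_of_real (burau_form_local r u (v + r\<^sup>2 * u - r\<^sup>2 * y) v)
      = complex_of_real (burau_form_local r u y v)"
    unfolding burau_form_local_def of_real_diff of_real_mult of_real_numeral two_Re complex_norm_square
      complex_cnj_add complex_cnj_diff complex_cnj_mult complex_cnj_power complex_cnj_cnj
    using identity[folded cnj_r] .
  then show ?thesis by (simp only: of_real_eq_iff)
qed

lemma burau_form_local_reflect_inv:
  assumes r: "cmod r = 1"
  shows "burau_form_local r u (u + inverse (r\<^sup>2) * (v - y)) v = burau_form_local r u y v"
proof -
  have "r \<noteq> 0" using r by auto
  then have "v + r\<^sup>2 * u - r\<^sup>2 * (u + inverse (r\<^sup>2) * (v - y)) = y"
    by (simp add: field_simps)
  then show ?thesis
    using burau_form_local_reflect[OF r, of u v "u + inverse (r\<^sup>2) * (v - y)"] by simp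
qed

lemma burau_form_update:
  assumes i: "1 \<le> i" "i < n" and same: "\<And>j. j \<le> n \<Longrightarrow> j \<noteq> i \<Longrightarrow> b j = a j"
    and local: "burau_form_local r (a (i - 1)) (b i) (a (i + 1))
              = burau_form_local r (a (i - 1)) (a i) (a (i + 1))"
  shows "burau_form n r b = burau_form n r a"
proof -
  define rest where "rest c = 2 * Re r * (\<Sum>j\<in>{1..<n} - {i}. (cmod (c j))\<^sup>2)
     - (\<Sum>j\<in>{..<n} - {i - 1} - {i}. 2 * Re (cnj r * cnj (c j) * c (Suc j)))" for c
  have split: "burau_form n r c = burau_form_local r (c (i - 1)) (c i) (c (i + 1)) + rest c" for c
  proof -
    have "(\<Sum>j\<in>{1..<n}. (cmod (c j))\<^sup>2) = (cmod (c i))\<^sup>2 + (\<Sum>j\<in>{1..<n} - {i}. (cmod (c j))\<^sup>2)"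
      using i by (intro sum.remove) auto
    moreover have "(\<Sum>j<n. 2 * Re (cnj r * cnj (c j) * c (Suc j)))
       = 2 * Re (cnj r * cnj (c (i - 1)) * c (Suc (i - 1)))
         + (\<Sum>j\<in>{..<n} - {i - 1}. 2 * Re (cnj r * cnj (c j) * c (Suc j)))"
      using i by (intro sum.remove) auto
    moreover have "(\<Sum>j\<in>{..<n} - {i - 1}. 2 * Re (cnj r * cnj (c j) * c (Suc j)))
       = 2 * Re (cnj r * cnj (c i) * c (Suc i))
         + (\<Sum>j\<in>{..<n} - {i - 1} - {i}. 2 * Re (cnj r * cnj (c j) * c (Suc j)))"
      using i by (intro sum.remove) auto
    moreover have "Suc (i - 1) = i" using i by simp
    ultimately show ?thesis unfolding burau_form_def burau_form_local_def rest_def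
      by (simp add: algebra_simps)
  qed
  have "rest b = rest a"
    unfolding rest_def using i same
    by (intro arg_cong2[where f = "(-)"] arg_cong2[where f = "(*)"] refl sum.cong) auto
  moreover have "b (i - 1) = a (i - 1)" "b (i + 1) = a (i + 1)" using i same by auto
  ultimately show ?thesis using split[of a] split[of b] local by simp
qed

definition burau_letter :: "nat \<Rightarrow> complex \<Rightarrow> nat \<Rightarrow> bool \<Rightarrow> complex mat" where
  "burau_letter n q i b = (if b then burau_gen n q i else burau_gen_inv n q i)"

lemma burau_Cons: "burau n q ((i, b) # w) = burau_letter n q i b * burau n q w"
  by (simp add: burau_letter_def)

lemma burau_letter_carrier: "burau_letter n q i b \<in> carrier_mat n n"
  by (simp add: burau_letter_def burau_gen_def burau_gen_inv_def)

lemma burau_carrier: "burau n q w \<in> carrier_mat n n"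
  by (induction n q w rule: burau.induct) (auto simp: burau_gen_def burau_gen_inv_def)

lemma burau_mult_vec_invariant:
  assumes "braid_word n w" and x: "x \<in> carrier_vec n"
    and letter: "\<And>i b y. 1 \<le> i \<Longrightarrow> i \<le> n - 1 \<Longrightarrow> y \<in> carrier_vec n
                   \<Longrightarrow> f (burau_letter n q i b *\<^sub>v y) = f y"
  shows "f (burau n q w *\<^sub>v x) = f x"
  using assms(1)
proof (induction w)
  case Nil
  then show ?case using x by simp
next
  case (Cons l w)
  obtain i b where l: "l = (i, b)" by fastforce
  have w: "braid_word n w" and i: "1 \<le> i" "i \<le> n - 1"
    using Cons.prems l by (auto simp: braid_word_def)
  have "burau n q (l # w) *\<^sub>v x = burau_letter n q i b *\<^sub>v (burau n q w *\<^sub>v x)"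
    unfolding l burau_Cons using burau_letter_carrier burau_carrier x by (rule assoc_mult_mat_vec)
  also have "f \<dots> = f (burau n q w *\<^sub>v x)"
    by (intro letter i mult_mat_vec_carrier[OF burau_carrier x])
  finally show ?case using Cons.IH[OF w] by simp
qed

lemma burau_letter_total:
  assumes "x \<in> carrier_vec n" "1 \<le> i" "i \<le> n - 1"
  shows "partial_sum (burau_letter n q i b *\<^sub>v x) n = partial_sum x n"
  using partial_sum_burau_gen(1)[OF assms, of n] partial_sum_burau_gen_inv(1)[OF assms, of n]
    assms(2,3)
  by (simp add: burau_letter_def)

lemma burau_letter_form:
  assumes r: "cmod r = 1" and x: "x \<in> carrier_vec n" and i: "1 \<le> i" "i \<le> n - 1"
  shows "burau_form n r (partial_sum (burau_letter n (r\<^sup>2) i b *\<^sub>v x)) = burau_form n r (partial_sum x)"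
proof (rule burau_form_update)
  show "1 \<le> i" "i < n" using i by auto
  show "partial_sum (burau_letter n (r\<^sup>2) i b *\<^sub>v x) j = partial_sum x j" if "j \<le> n" "j \<noteq> i" for j
    using partial_sum_burau_gen(1)[OF x i] partial_sum_burau_gen_inv(1)[OF x i] that
    by (auto simp: burau_letter_def)
  show "burau_form_local r (partial_sum x (i - 1)) (partial_sum (burau_letter n (r\<^sup>2) i b *\<^sub>v x) i)
        (partial_sum x (i + 1))
      = burau_form_local r (partial_sum x (i - 1)) (partial_sum x i) (partial_sum x (i + 1))"
    using burau_form_local_reflect[OF r] burau_form_local_reflect_inv[OF r]
    by (simp add: burau_letter_def partial_sum_burau_gen(2)[OF x i] partial_sum_burau_gen_inv(2)[OF x i])
qed

lemma two_mult_le_weighted_squares: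
  fixes x y \<alpha> \<beta> :: real
  assumes "\<alpha> > 0" "\<beta> > 0"
  shows "2 * x * y \<le> \<beta> / \<alpha> * x\<^sup>2 + \<alpha> / \<beta> * y\<^sup>2"
proof -
  have "0 \<le> (\<beta> * x - \<alpha> * y)\<^sup>2" by simp
  then have "2 * x * y * (\<alpha> * \<beta>) \<le> \<beta>\<^sup>2 * x\<^sup>2 + \<alpha>\<^sup>2 * y\<^sup>2"
    by (simp add: power2_eq_square algebra_simps)
  then show ?thesis using assms by (simp add: field_simps power2_eq_square)
qed

text \<open>Weighted AM-GM with the Perron eigenvector \<open>w j = sin (j \<pi> / n)\<close> of the path graph,
  which satisfies \<open>w (j - 1) + w (j + 1) = 2 cos (\<pi> / n) w j\<close>.\<close>
lemma sum_adjacent_products_le: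
  fixes b :: "nat \<Rightarrow> real"
  assumes n: "n \<ge> 1" and b0: "b 0 = 0" and bn: "b n = 0"
  shows "(\<Sum>j<n. 2 * b j * b (Suc j)) \<le> 2 * cos (pi / n) * (\<Sum>j\<in>{1..<n}. (b j)\<^sup>2)"
proof -
  define w where "w j = sin (real j * pi / real n)" for j
  have w0: "w 0 = 0" and wn: "w n = 0" using n by (simp_all add: w_def)
  have wpos: "w j > 0" if "1 \<le> j" "j < n" for j
    unfolding w_def using that by (intro sin_gt_zero) (auto simp: field_simps)
  have rec: "w (Suc j) + w (j - 1) = 2 * cos (pi / n) * w j" if "1 \<le> j" for j
  proof -
    have "real (Suc j) * pi / real n = real j * pi / real n + pi / n"
      "real (j - 1) * pi / real n = real j * pi / real n - pi / n"
      using that by (simp_all add: of_nat_diff add_divide_distrib diff_divide_distrib algebra_simps)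
    then show ?thesis unfolding w_def by (simp add: sin_add sin_diff)
  qed
  \<comment> \<open>At \<open>j = 0\<close> and \<open>j = n - 1\<close> both sides vanish, the right one through \<open>x / 0 = 0\<close>.\<close>
  have pair: "2 * b j * b (Suc j) \<le> w (Suc j) / w j * (b j)\<^sup>2 + w j / w (Suc j) * (b (Suc j))\<^sup>2"
    if "j < n" for j
  proof (cases "j = 0 \<or> Suc j = n")
    case True
    then show ?thesis using b0 bn w0 wn by auto
  next
    case False
    then show ?thesis using that by (intro two_mult_le_weighted_squares wpos) auto
  qed
  have "(\<Sum>j<n. 2 * b j * b (Suc j))
      \<le> (\<Sum>j<n. w (Suc j) / w j * (b j)\<^sup>2) + (\<Sum>j<n. w j / w (Suc j) * (b (Suc j))\<^sup>2)"
    unfolding sum.distrib[symmetric] using pair by (intro sum_mono) auto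
  also have "(\<Sum>j<n. w (Suc j) / w j * (b j)\<^sup>2) = (\<Sum>j\<in>{1..<n}. w (Suc j) / w j * (b j)\<^sup>2)"
  proof -
    have "{..<n} = insert 0 {1..<n}" using n by auto
    then show ?thesis using b0 by simp
  qed
  also have "(\<Sum>j<n. w j / w (Suc j) * (b (Suc j))\<^sup>2) = (\<Sum>j\<in>{1..<Suc n}. w (j - 1) / w j * (b j)\<^sup>2)"
    using sum.shift_bounds_Suc_ivl[of "\<lambda>j. w (j - 1) / w j * (b j)\<^sup>2" 0 n]
    by (simp add: atLeast0LessThan)
  also have "\<dots> = (\<Sum>j\<in>{1..<n}. w (j - 1) / w j * (b j)\<^sup>2)"
    using n bn by simp
  also have "(\<Sum>j\<in>{1..<n}. w (Suc j) / w j * (b j)\<^sup>2) + (\<Sum>j\<in>{1..<n}. w (j - 1) / w j * (b j)\<^sup>2)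
      = (\<Sum>j\<in>{1..<n}. 2 * cos (pi / n) * (b j)\<^sup>2)"
    unfolding sum.distrib[symmetric]
  proof (rule sum.cong)
    fix j assume "j \<in> {1..<n}"
    then have "w (Suc j) / w j * (b j)\<^sup>2 + w (j - 1) / w j * (b j)\<^sup>2
        = (w (Suc j) + w (j - 1)) / w j * (b j)\<^sup>2"
      by (simp add: add_divide_distrib distrib_right)
    then show "w (Suc j) / w j * (b j)\<^sup>2 + w (j - 1) / w j * (b j)\<^sup>2 = 2 * cos (pi / n) * (b j)\<^sup>2"
      using rec[of j] wpos[of j] \<open>j \<in> {1..<n}\<close> by simp
  qed simp
  finally show ?thesis by (simp add: sum_distrib_left)
qed

lemma burau_form_pos:
  assumes r: "cmod r = 1" and cos_lt: "cos (pi / n) < Re r" and n: "n \<ge> 1"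
    and a0: "a 0 = 0" and an: "a n = 0" and j: "j \<in> {1..<n}" "a j \<noteq> 0"
  shows "burau_form n r a > 0"
proof -
  define b where "b j = cmod (a j)" for j
  have "2 * Re (cnj r * cnj (a j) * a (Suc j)) \<le> 2 * b j * b (Suc j)" for j
    using complex_Re_le_cmod[of "cnj r * cnj (a j) * a (Suc j)"] r by (simp add: b_def norm_mult)
  then have "burau_form n r a \<ge> 2 * Re r * (\<Sum>j\<in>{1..<n}. (b j)\<^sup>2) - (\<Sum>j<n. 2 * b j * b (Suc j))"
    unfolding burau_form_def b_def by (intro diff_left_mono sum_mono) auto
  moreover have "(\<Sum>j<n. 2 * b j * b (Suc j)) \<le> 2 * cos (pi / n) * (\<Sum>j\<in>{1..<n}. (b j)\<^sup>2)"
    using n a0 an by (intro sum_adjacent_products_le) (auto simp: b_def)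
  moreover have "(\<Sum>j\<in>{1..<n}. (b j)\<^sup>2) > 0"
    using j by (intro sum_pos2[of _ j]) (auto simp: b_def)
  ultimately show ?thesis
    using cos_lt by (smt (verit) mult_strict_right_mono)
qed

lemma burau_form_cong: "(\<And>j. j \<le> n \<Longrightarrow> a j = b j) \<Longrightarrow> burau_form n r a = burau_form n r b"
  unfolding burau_form_def
  by (intro arg_cong2[where f = "(-)"] arg_cong2[where f = "(*)"] refl sum.cong) auto

lemma burau_form_scale: "burau_form n r (\<lambda>j. c * a j) = (cmod c)\<^sup>2 * burau_form n r a"
proof -
  have square_term: "(cmod (c * a j))\<^sup>2 = (cmod c)\<^sup>2 * (cmod (a j))\<^sup>2" for j
    by (simp add: norm_mult power_mult_distrib)
  have cross_term: "2 * Re (cnj r * cnj (c * a j) * (c * a (Suc j)))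
      = (cmod c)\<^sup>2 * (2 * Re (cnj r * cnj (a j) * a (Suc j)))" for j
  proof -
    have "cnj r * cnj (c * a j) * (c * a (Suc j))
        = complex_of_real ((cmod c)\<^sup>2) * (cnj r * cnj (a j) * a (Suc j))"
      unfolding complex_norm_square by (simp add: algebra_simps)
    moreover have "Re (complex_of_real x * z) = x * Re z" for x z by simp
    ultimately show ?thesis by (metis mult.left_commute)
  qed
  show ?thesis
    unfolding burau_form_def square_term cross_term by (simp add: sum_distrib_left algebra_simps)
qed

lemma partial_sum_nonzero_inside:
  assumes v: "v \<in> carrier_vec n" "v \<noteq> 0\<^sub>v n" and total: "partial_sum v n = 0"
  shows "\<exists>j\<in>{1..<n}. partial_sum v j \<noteq> 0"
proof (rule ccontr)
  assume "\<not> ?thesis"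
  then have zero: "partial_sum v j = 0" if "j \<le> n" for j
    using that total by (cases "j = 0"; cases "j = n") (auto simp: partial_sum_def)
  have "v = 0\<^sub>v n"
  proof (rule eq_vecI)
    fix k assume "k < dim_vec (0\<^sub>v n :: complex vec)"
    then show "v $ k = 0\<^sub>v n $ k"
      using zero[of k] zero[of "Suc k"] partial_sum_Suc[of v k] by simp
  qed (use v in simp)
  with v show False by simp
qed

lemma isCont_det:
  fixes A :: "'a::t2_space \<Rightarrow> complex mat"
  assumes carrier: "\<And>z. A z \<in> carrier_mat n n"
    and entries: "\<And>i j. i < n \<Longrightarrow> j < n \<Longrightarrow> isCont (\<lambda>z. A z $$ (i, j)) s"
  shows "isCont (\<lambda>z. det (A z)) s"
proof -
  have "(\<lambda>z. det (A z)) = (\<lambda>z. \<Sum>p\<in>{p. p permutes {0..<n}}. signof p * (\<Prod>i = 0..<n. A z $$ (i, p i)))"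
    using det_def'[OF carrier] by blast
  moreover have "isCont (\<lambda>z. A z $$ (i, p i)) s" if "p permutes {0..<n}" "i \<in> {0..<n}" for p i
    using that permutes_in_image[OF that(1)] by (intro entries) auto
  ultimately show ?thesis
    by (auto intro!: continuous_intros)
qed

lemma is_pole_inverse_imp_zero:
  fixes g :: "'a::{perfect_space, t2_space} \<Rightarrow> 'b::real_normed_div_algebra"
  assumes "isCont g s" and "is_pole (\<lambda>z. inverse (g z)) s"
  shows "g s = 0"
proof (rule ccontr)
  assume "g s \<noteq> 0"
  then have "((\<lambda>z. inverse (g z)) \<longlongrightarrow> inverse (g s)) (at s)"
    using assms(1) by (intro tendsto_inverse) (auto simp: isCont_def)
  then show False
    using assms(2) not_tendsto_and_filterlim_at_infinity[of "at s"] unfolding is_pole_def by auto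
qed

lemma eigenvector_if_kernel_one_minus_smult:
  fixes M :: "'a::comm_ring_1 mat"
  assumes M: "M \<in> carrier_mat n n" and v: "v \<in> carrier_vec n"
    and ker: "(1\<^sub>m n - c \<cdot>\<^sub>m M) *\<^sub>v v = 0\<^sub>v n"
  shows "v = c \<cdot>\<^sub>v (M *\<^sub>v v)"
proof -
  have "(c \<cdot>\<^sub>m M) *\<^sub>v v = c \<cdot>\<^sub>v (M *\<^sub>v v)"
    using M v by (intro eq_vecI) (auto simp: scalar_prod_def sum_distrib_left algebra_simps)
  then have "0\<^sub>v n = v - c \<cdot>\<^sub>v (M *\<^sub>v v)"
    using M v ker by (simp add: minus_mult_distrib_mat_vec[of _ n n] flip: ker)
  then show ?thesis
    using M v by (intro eq_vecI) (auto simp: vec_eq_iff)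
qed

lemma burau_eigenvalue_norm_eq_1:
  assumes r: "cmod r = 1" and cos_lt: "cos (pi / n) < Re r" and n: "n \<ge> 1"
    and w: "braid_word n w"
    and v: "v \<in> carrier_vec n" "v \<noteq> 0\<^sub>v n" "(1\<^sub>m n - c \<cdot>\<^sub>m burau n (r\<^sup>2) w) *\<^sub>v v = 0\<^sub>v n"
  shows "cmod c = 1"
proof -
  define M where "M = burau n (r\<^sup>2) w"
  have M: "M \<in> carrier_mat n n" unfolding M_def by (rule burau_carrier)
  define u where "u = M *\<^sub>v v"
  have u: "u \<in> carrier_vec n" unfolding u_def using M v(1) by simp
  have v_u: "v = c \<cdot>\<^sub>v u"
    unfolding u_def using M v(1) v(3)[folded M_def] by (rule eigenvector_if_kernel_one_minus_smult)
  have partial_sum_v_u: "partial_sum v j = c * partial_sum u j" if "j \<le> n" for j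
    unfolding v_u using partial_sum_smult[of j u c] u that by simp
  have total: "partial_sum u n = partial_sum v n"
    unfolding u_def M_def using w v(1) by (rule burau_mult_vec_invariant) (rule burau_letter_total)
  have form: "burau_form n r (partial_sum u) = burau_form n r (partial_sum v)"
    unfolding u_def M_def using w v(1)
    by (rule burau_mult_vec_invariant[where f = "\<lambda>x. burau_form n r (partial_sum x)"])
      (rule burau_letter_form[OF r])
  show ?thesis
  proof (cases "partial_sum v n = 0")
    case False
    have "partial_sum v n = c * partial_sum v n"
      using partial_sum_v_u[of n] unfolding total by simp
    with False have "c = 1" by simp
    then show ?thesis by simp
  next
    case True
    then obtain j where j: "j \<in> {1..<n}" "partial_sum v j \<noteq> 0"
      using partial_sum_nonzero_inside v(1,2) by blast
    have pos: "burau_form n r (partial_sum v) > 0"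
      using n j True by (intro burau_form_pos[OF r cos_lt]) (auto simp: partial_sum_def)
    have "burau_form n r (partial_sum v) = burau_form n r (\<lambda>j. c * partial_sum u j)"
      using partial_sum_v_u by (rule burau_form_cong)
    also have "\<dots> = (cmod c)\<^sup>2 * burau_form n r (partial_sum v)"
      unfolding burau_form_scale form ..
    finally have "(cmod c)\<^sup>2 = 1" using pos by simp
    then show ?thesis using norm_ge_zero[of c] by (auto simp: power2_eq_1_iff)
  qed
qed

theorem theorem1p2:
  fixes n :: nat and \<theta> :: real and w :: braid_word and s :: complex
  assumes "n \<ge> 2"
    and "\<bar>\<theta>\<bar> < 2 * pi / real n"
    and "braid_word n w"
    and "is_pole (\<lambda>z. braid_zeta n (exp (\<i> * complex_of_real \<theta>)) w (exp (- z))) s"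
  shows "Re s = 0"
proof -
  define r where "r = exp (\<i> * complex_of_real (\<theta> / 2))"
  have r: "cmod r = 1" unfolding r_def by simp
  have q: "exp (\<i> * complex_of_real \<theta>) = r\<^sup>2"
    unfolding r_def by (simp add: power2_eq_square exp_add[symmetric])
  have "cos (pi / n) < cos \<bar>\<theta> / 2\<bar>"
    using assms(1,2) by (intro cos_monotone_0_pi) (auto simp: field_simps)
  then have cos_lt: "cos (pi / n) < Re r" unfolding cos_abs_real r_def by (simp add: Re_exp)
  define A where "A z = 1\<^sub>m n - exp (- z) \<cdot>\<^sub>m burau n (r\<^sup>2) w" for z
  have A: "A z \<in> carrier_mat n n" for z
    unfolding A_def by (intro minus_carrier_mat smult_carrier_mat burau_carrier)
  have "A z $$ (i, j) = (if i = j then 1 else 0) - exp (- z) * burau n (r\<^sup>2) w $$ (i, j)"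
    if "i < n" "j < n" for z i j
    unfolding A_def using that burau_carrier[of n "r\<^sup>2" w] by simp
  then have "isCont (\<lambda>z. det (A z)) s"
    by (intro isCont_det[OF A]) (simp add: continuous_intros)
  then have "det (A s) = 0"
    using assms(4) by (intro is_pole_inverse_imp_zero) (simp_all add: braid_zeta_def q A_def)
  then obtain v where "v \<in> carrier_vec n" "v \<noteq> 0\<^sub>v n" "A s *\<^sub>v v = 0\<^sub>v n"
    using det_0_iff_vec_prod_zero[OF A] by blast
  then have "cmod (exp (- s)) = 1"
    using assms(1,3) by (intro burau_eigenvalue_norm_eq_1[OF r cos_lt]) (auto simp: A_def)
  then show ?thesis by (simp add: norm_exp_eq_Re)
qed

end
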